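(* Let $(i,j,t,u,v)$ be an arbitrary permutation of $(1,2,3,4,5)$. The following monomials in $P_5$ are strictly inadmissible: (i) $x_i^{7}x_j^{9}x_t^{2}x_u^{15}x_v^{15}$, $x_i^{3}x_j^{7}x_t^{8}x_u^{15}x_v^{15}$, $x_i^{7}x_j^{3}x_t^{8}x_u^{15}x_v^{15}$, $x_i^{7}x_j^{8}x_t^{3}x_u^{15}x_v^{15}$, for $i<j<t$; (ii) $x_r^{15}\theta_{J_r}(w)$ for $1\le r\le5$ and $w$ one of $x_1^{7}x_2^{8}x_3^{7}x_4^{11}$, $x_1^{7}x_2^{9}x_3^{3}x_4^{14}$, $x_1^{7}x_2^{9}x_3^{6}x_4^{11}$, $x_1^{7}x_2^{9}x_3^{7}x_4^{10}$, $x_1^{7}x_2^{9}x_3^{14}x_4^{3}$, $x_1^{7}x_2^{11}x_3^{7}x_4^{8}$; (iii) $x_1^{7}x_2^{9}x_3^{7}x_4^{14}x_5^{11}$ and $x_1^{7}x_2^{9}x_3^{14}x_4^{7}x_5^{11}$.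
   Context: $P_k=\mathbb F_2[x_1,\dots,x_k]$, $\deg x_i=1$, with the standard action of the mod-2 Steenrod algebra $\mathcal A$. $\mathcal A_s$ is the sub-Hopf algebra generated by $Sq^i$, $0\le i\le2^s$, and $\mathcal A_s^+=\mathcal A^+\cap\mathcal A_s$. For a monomial $x$, $\nu_j(x)$ is the exponent of $x_j$, $\alpha_i(a)$ the $i$-th binary digit of $a$, $\omega(x)=(\omega_i(x))$ with $\omega_i(x)=\sum_j\alpha_{i-1}(\nu_j(x))$, $\sigma(x)=(\nu_1(x),\dots,\nu_k(x))$, both ordered left-lexicographically; for monomials of equal degree $u<v$ iff $\omega(u)<\omega(v)$, or $\omega(u)=\omega(v)$ and $\sigma(u)<\sigma(v)$. A monomial $u$ is strictly inadmissible if there exist monomials $v_1,\dots,v_r<u$ with $u+\sum_jv_j\in\mathcal A_{s-1}^+P_k$, where $s=\max\{i:\omega_i(u)>0\}$. For $1\le r\le5$, $J_r=(1,\dots,\hat r,\dots,5)$ and $\theta_{J_r}:P_4\to P_5$ is the algebra map sending $x_t$ to the variable indexed by the $t$-th entry of $J_r$. *)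

theory Defs
  imports Main
begin

text \<open>Monomials of P_k = F_2[x_1,...,x_k] are exponent functions nat => nat supported
 on {1..k} (value at n = exponent of x_n).  Polynomials over F_2 are finite sets of
 monomials (the monomials with coefficient 1); addition is symmetric difference.\<close>

type_synonym mono = "nat \<Rightarrow> nat"
type_synonym poly = "mono set"

definition is_mono :: "nat \<Rightarrow> mono \<Rightarrow> bool" where
  "is_mono k e \<longleftrightarrow> (\<forall>n. n \<notin> {1..k} \<longrightarrow> e n = 0)"

definition polys :: "nat \<Rightarrow> poly set" where
  "polys k = {f. finite f \<and> (\<forall>e\<in>f. is_mono k e)}"

definition padd :: "poly \<Rightarrow> poly \<Rightarrow> poly" where
  "padd f g = (f - g) \<union> (g - f)"

definition mon :: "(nat \<times> nat) list \<Rightarrow> mono" where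
  "mon ps n = sum_list [e. (m, e) \<leftarrow> ps, m = n]"

definition mmul :: "mono \<Rightarrow> mono \<Rightarrow> mono" where
  "mmul a b n = a n + b n"

definition deg :: "nat \<Rightarrow> mono \<Rightarrow> nat" where
  "deg k e = (\<Sum>n\<in>{1..k}. e n)"

text \<open>Standard action: Sq^a(x_1^{e_1}...x_k^{e_k}) = sum over d with |d| = a of
 prod_n binom(e_n,d_n) x^{e+d} (Cartan formula and Sq^a x^e = binom(e,a) x^{e+a}).\<close>
definition sq_mono :: "nat \<Rightarrow> nat \<Rightarrow> mono \<Rightarrow> poly" where
  "sq_mono k a e = {(\<lambda>n. e n + d n) | d. (\<forall>n. n \<notin> {1..k} \<longrightarrow> d n = 0)
      \<and> (\<Sum>n\<in>{1..k}. d n) = a \<and> odd (\<Prod>n\<in>{1..k}. (e n choose d n))}"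

definition Sq :: "nat \<Rightarrow> nat \<Rightarrow> poly \<Rightarrow> poly" where
  "Sq k a f = {m. odd (card {e\<in>f. m \<in> sq_mono k a e})}"

text \<open>hitsp k s = A_s^+ P_k, where A_s is generated by Sq^i, 0 <= i <= 2^s.
 Since Sq^0 = 1, A_s^+ P_k is the F_2-span of the images Sq^i(P_k), 1 <= i <= 2^s.\<close>
inductive_set hitsp :: "nat \<Rightarrow> nat \<Rightarrow> poly set" for k s where
  zero: "{} \<in> hitsp k s"
| gen: "f \<in> polys k \<Longrightarrow> 1 \<le> i \<Longrightarrow> i \<le> 2 ^ s \<Longrightarrow> Sq k i f \<in> hitsp k s"
| add: "f \<in> hitsp k s \<Longrightarrow> g \<in> hitsp k s \<Longrightarrow> padd f g \<in> hitsp k s"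

text \<open>omega_i(x) = sum_j alpha_{i-1}(nu_j(x)), for i >= 1 (value at 0 is irrelevant: 0).\<close>
definition omega :: "nat \<Rightarrow> mono \<Rightarrow> nat \<Rightarrow> nat" where
  "omega k e i = (if i = 0 then 0 else (\<Sum>j\<in>{1..k}. (e j div 2 ^ (i - 1)) mod 2))"

definition lexless :: "(nat \<Rightarrow> nat) \<Rightarrow> (nat \<Rightarrow> nat) \<Rightarrow> bool" where
  "lexless a b \<longleftrightarrow> (\<exists>i. (\<forall>j<i. a j = b j) \<and> a i < b i)"

definition mono_less :: "nat \<Rightarrow> mono \<Rightarrow> mono \<Rightarrow> bool" where
  "mono_less k u v \<longleftrightarrow> deg k u = deg k v \<and>
     (lexless (omega k u) (omega k v) \<or> (omega k u = omega k v \<and> lexless u v))"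

definition strictly_inadmissible :: "nat \<Rightarrow> mono \<Rightarrow> bool" where
  "strictly_inadmissible k u \<longleftrightarrow> is_mono k u \<and>
     (let s = Max {i. 1 \<le> i \<and> 0 < omega k u i} in
      \<exists>V. finite V \<and> (\<forall>v\<in>V. is_mono k v \<and> mono_less k v u) \<and>
          padd {u} V \<in> hitsp k (s - 1))"

definition Jr :: "nat \<Rightarrow> nat \<Rightarrow> nat" where
  "Jr r t = (if t < r then t else t + 1)"

definition theta :: "nat \<Rightarrow> mono \<Rightarrow> mono" where
  "theta r w n = (\<Sum>t\<in>{t\<in>{1..4}. Jr r t = n}. w t)"

end

theory Submission
  imports Defs
begin

(* A monomial u is strictly inadmissible as soon as some element of A_{s-1}^+ P_5 has u as its
   largest monomial: u plus the remaining monomials, all smaller than u, is then hit. Such an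
   element is given by a certificate, a list of pairs (i, g) with 1 <= i <= 2^{s-1} standing for
   the sum of the Sq^i x^g. It is valid if, after expanding each Sq^i x^g by the Cartan formula
   and cancelling modulo 2, u is the only monomial that is not below u. For all monomials of the
   lemma s = 4, and checking a certificate is a finite computation done by the simplifier.
   The monomials of (i) and (ii) come in families obtained by inserting variables with exponent
   15 = 2^4 - 1 into a monomial in fewer variables; inserting the same columns of 15s into the
   generators of one certificate for the smaller monomial gives a certificate for each member
   of the family, which is then checked separately. *)

definition mono_of :: "nat list \<Rightarrow> mono" where
  "mono_of xs n = (if 1 \<le> n \<and> n \<le> length xs then xs ! (n - 1) else 0)"

lemma mono_of_inject:
  assumes "length xs = length ys" and "mono_of xs = mono_of ys"
  shows "xs = ys"
proof (rule nth_equalityI)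
  show "length xs = length ys" by fact
  fix i assume "i < length xs"
  from fun_cong[OF assms(2), of "Suc i"] show "xs ! i = ys ! i"
    using assms(1) \<open>i < length xs\<close> by (simp add: mono_of_def)
qed

lemma is_mono_mono_of: "length xs \<le> k \<Longrightarrow> is_mono k (mono_of xs)"
  by (auto simp: is_mono_def mono_of_def)

lemma sum_mono_of: "(\<Sum>n\<in>{1..length xs}. f (mono_of xs n)) = sum_list (map f xs)"
proof -
  have "(\<Sum>n\<in>{1..length xs}. f (mono_of xs n)) = (\<Sum>i<length xs. f (mono_of xs (Suc i)))"
    by (rule sum.reindex_bij_witness[of _ Suc "\<lambda>n. n - 1"]) auto
  also have "\<dots> = (\<Sum>i<length xs. f (xs ! i))"
    by (intro sum.cong) (auto simp: mono_of_def)
  finally show ?thesis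
    by (simp add: sum_list_sum_nth atLeast0LessThan)
qed

lemma deg_mono_of: "deg (length xs) (mono_of xs) = sum_list xs"
  using sum_mono_of[of id xs] by (simp add: deg_def)

fun compositions :: "nat \<Rightarrow> nat list list \<Rightarrow> nat list list" where
  "compositions a [] = (if a = 0 then [[]] else [])"
| "compositions a (D # Ds) =
     concat (map (\<lambda>d. map (Cons d) (compositions (a - d) Ds)) (filter (\<lambda>d. d \<le> a) D))"

lemma set_compositions:
  "set (compositions a Ds) =
     {ds. length ds = length Ds \<and> sum_list ds = a \<and> (\<forall>i<length Ds. ds ! i \<in> set (Ds ! i))}"
proof (induction Ds arbitrary: a)
  case Nil
  then show ?case by auto
next
  case (Cons D Ds)
  show ?case
  proof (intro set_eqI iffI)
    fix ds assume "ds \<in> set (compositions a (D # Ds))"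
    then show "ds \<in> {ds. length ds = length (D # Ds) \<and> sum_list ds = a \<and>
                        (\<forall>i<length (D # Ds). ds ! i \<in> set ((D # Ds) ! i))}"
      using Cons.IH by (auto simp: nth_Cons split: nat.splits)
  next
    fix ds assume "ds \<in> {ds. length ds = length (D # Ds) \<and> sum_list ds = a \<and>
                          (\<forall>i<length (D # Ds). ds ! i \<in> set ((D # Ds) ! i))}"
    then obtain d ds' where "ds = d # ds'" "length ds' = length Ds" "d + sum_list ds' = a"
      "d \<in> set D" "\<forall>i<length Ds. ds' ! i \<in> set (Ds ! i)"
      by (cases ds) (fastforce simp: nth_Cons_Suc)+
    then show "ds \<in> set (compositions a (D # Ds))"
      using Cons.IH[of "a - d"] by force
  qed
qed

definition sq_list :: "nat \<Rightarrow> nat list \<Rightarrow> nat list list" where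
  "sq_list a xs = map (map2 (+) xs)
     (compositions a (map (\<lambda>x. filter (\<lambda>d. odd (x choose d)) [0..<Suc a]) xs))"

lemma length_sq_list: "ys \<in> set (sq_list a xs) \<Longrightarrow> length ys = length xs"
  by (auto simp: sq_list_def set_compositions)

lemma sq_mono_mono_of:
  "sq_mono (length xs) a (mono_of xs) = mono_of ` set (sq_list a xs)"
proof (intro set_eqI iffI)
  let ?k = "length xs"
  fix m assume "m \<in> sq_mono ?k a (mono_of xs)"
  then obtain d where m: "m = (\<lambda>n. mono_of xs n + d n)"
    and supp: "\<forall>n. n \<notin> {1..?k} \<longrightarrow> d n = 0" and sum_d: "(\<Sum>n\<in>{1..?k}. d n) = a"
    and odd_d: "odd (\<Prod>n\<in>{1..?k}. mono_of xs n choose d n)"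
    unfolding sq_mono_def by blast
  define ds where "ds = map (\<lambda>i. d (Suc i)) [0..<?k]"
  have lds: "length ds = ?k" by (simp add: ds_def)
  have d_eq: "d = mono_of ds"
    using supp by (auto simp: fun_eq_iff mono_of_def ds_def)
  have "sum_list ds = a"
    using sum_d sum_mono_of[of id ds] by (simp add: d_eq lds)
  moreover have "ds ! i \<in> set (filter (\<lambda>d. odd (xs ! i choose d)) [0..<Suc a])"
    if "i < ?k" for i
  proof -
    have "odd (mono_of xs (Suc i) choose d (Suc i))"
      using odd_d that by (auto simp: even_prod_iff)
    moreover have "d (Suc i) \<le> a"
      using sum_d member_le_sum[of "Suc i" "{1..?k}" d] that by auto
    ultimately show ?thesis
      using that by (simp add: mono_of_def ds_def del: upt_Suc)
  qed
  ultimately have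
    "ds \<in> set (compositions a (map (\<lambda>x. filter (\<lambda>d. odd (x choose d)) [0..<Suc a]) xs))"
    using lds unfolding set_compositions by simp
  moreover have "m = mono_of (map2 (+) xs ds)"
    using lds by (auto simp: fun_eq_iff m d_eq mono_of_def)
  ultimately show "m \<in> mono_of ` set (sq_list a xs)"
    unfolding sq_list_def by auto
next
  let ?k = "length xs"
  fix m assume "m \<in> mono_of ` set (sq_list a xs)"
  then obtain ds where m: "m = mono_of (map2 (+) xs ds)" and lds: "length ds = ?k"
    and sum_ds: "sum_list ds = a" and odd_ds: "\<forall>i<?k. odd (xs ! i choose ds ! i)"
    by (auto simp: sq_list_def set_compositions simp del: upt_Suc)
  have "\<forall>n. n \<notin> {1..?k} \<longrightarrow> mono_of ds n = 0"
    using lds by (simp add: mono_of_def)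
  moreover have "(\<Sum>n\<in>{1..?k}. mono_of ds n) = a"
    using sum_mono_of[of id ds] lds sum_ds by simp
  moreover have "odd (\<Prod>n\<in>{1..?k}. mono_of xs n choose mono_of ds n)"
    using odd_ds lds by (auto simp: even_prod_iff mono_of_def)
  moreover have "m = (\<lambda>n. mono_of xs n + mono_of ds n)"
    using lds by (auto simp: fun_eq_iff m mono_of_def)
  ultimately show "m \<in> sq_mono ?k a (mono_of xs)"
    unfolding sq_mono_def by blast
qed

lemma Sq_singleton: "Sq k a {e} = sq_mono k a e"
proof -
  have "{e'\<in>{e}. m \<in> sq_mono k a e'} = (if m \<in> sq_mono k a e then {e} else {})" for m
    by auto
  then show ?thesis
    by (auto simp: Sq_def)
qed

definition symdiff_list :: "'a list \<Rightarrow> 'a list \<Rightarrow> 'a list" where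
  "symdiff_list xs ys = filter (\<lambda>x. x \<notin> set ys) xs @ filter (\<lambda>y. y \<notin> set xs) ys"

lemma set_symdiff_list: "set (symdiff_list xs ys) = (set xs - set ys) \<union> (set ys - set xs)"
  by (auto simp: symdiff_list_def)

fun sq_sum :: "(nat \<times> nat list) list \<Rightarrow> nat list list" where
  "sq_sum [] = []"
| "sq_sum ((i, g) # gs) = symdiff_list (sq_list i g) (sq_sum gs)"

lemma padd_mono_of_image:
  assumes "\<forall>xs\<in>A \<union> B. length xs = k"
  shows "padd (mono_of ` A) (mono_of ` B) = mono_of ` ((A - B) \<union> (B - A))"
proof -
  have inj: "inj_on mono_of (A \<union> B)"
    using assms mono_of_inject by (metis inj_onI)
  show ?thesis
    unfolding padd_def image_Un
    using inj_on_image_set_diff[OF inj, of A B] inj_on_image_set_diff[OF inj, of B A] by auto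
qed

lemma length_sq_sum:
  "\<forall>(i, g)\<in>set gs. length g = k \<Longrightarrow> ys \<in> set (sq_sum gs) \<Longrightarrow> length ys = k"
proof (induction gs rule: sq_sum.induct)
  case (2 i g gs)
  then show ?case
    using length_sq_list[of ys i g] by (auto simp: set_symdiff_list)
qed simp

lemma sq_sum_in_hitsp:
  "\<forall>(i, g)\<in>set gs. 1 \<le> i \<and> i \<le> 2 ^ s \<and> length g = k \<Longrightarrow> mono_of ` set (sq_sum gs) \<in> hitsp k s"
proof (induction gs rule: sq_sum.induct)
  case 1
  then show ?case by (simp add: hitsp.zero)
next
  case (2 i g gs)
  have i: "1 \<le> i" "i \<le> 2 ^ s" and lg: "length g = k"
    using "2.prems" by auto
  have rest: "mono_of ` set (sq_sum gs) \<in> hitsp k s"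
    using "2.IH" "2.prems" by simp
  have "{mono_of g} \<in> polys k"
    using is_mono_mono_of[of g k] lg by (simp add: polys_def)
  then have "Sq k i {mono_of g} \<in> hitsp k s"
    using hitsp.gen i by blast
  then have first: "mono_of ` set (sq_list i g) \<in> hitsp k s"
    using sq_mono_mono_of[of g i] lg by (simp add: Sq_singleton)
  have "\<forall>(i, g)\<in>set gs. length g = k"
    using "2.prems" by auto
  then have lengths: "\<forall>ys\<in>set (sq_list i g) \<union> set (sq_sum gs). length ys = k"
    using length_sq_sum length_sq_list lg by blast
  have "mono_of ` set (sq_sum ((i, g) # gs)) =
      padd (mono_of ` set (sq_list i g)) (mono_of ` set (sq_sum gs))"
    using padd_mono_of_image[OF lengths] by (simp add: set_symdiff_list)
  then show ?case
    using hitsp.add[OF first rest] by simp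
qed

fun sq_sum_filter :: "(nat list \<Rightarrow> bool) \<Rightarrow> (nat \<times> nat list) list \<Rightarrow> nat list list" where
  "sq_sum_filter P [] = []"
| "sq_sum_filter P ((i, g) # gs) = symdiff_list (filter P (sq_list i g)) (sq_sum_filter P gs)"

lemma set_sq_sum_filter: "set (sq_sum_filter P gs) = set (filter P (sq_sum gs))"
  by (induction P gs rule: sq_sum_filter.induct) (auto simp: set_symdiff_list)

fun omega_list :: "nat \<Rightarrow> nat list \<Rightarrow> nat list" where
  "omega_list 0 xs = []"
| "omega_list (Suc n) xs = sum_list (map (\<lambda>e. e mod 2) xs) # omega_list n (map (\<lambda>e. e div 2) xs)"

lemma omega_list_if:
  "omega_list n xs = (if n = 0 then [] else
     sum_list (map (\<lambda>e. e mod 2) xs) # omega_list (n - 1) (map (\<lambda>e. e div 2) xs))"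
  by (cases n) simp_all

lemma length_omega_list [simp]: "length (omega_list n xs) = n"
  by (induction n arbitrary: xs) auto

lemma nth_omega_list:
  "b < n \<Longrightarrow> omega_list n xs ! b = sum_list (map (\<lambda>e. e div 2 ^ b mod 2) xs)"
proof (induction n arbitrary: xs b)
  case (Suc n)
  then show ?case
    by (cases b) (simp_all add: comp_def div_mult2_eq)
qed simp

lemma omega_mono_of:
  assumes "\<forall>e\<in>set xs. e < 2 ^ n"
  shows "omega (length xs) (mono_of xs) = mono_of (omega_list n xs)"
proof
  fix i
  show "omega (length xs) (mono_of xs) i = mono_of (omega_list n xs) i"
  proof (cases "1 \<le> i \<and> i \<le> n")
    case True
    then have "i - 1 < n" by arith
    with True show ?thesis
      using sum_mono_of[of "\<lambda>e. e div 2 ^ (i - 1) mod 2" xs]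
      by (simp add: omega_def mono_of_def nth_omega_list)
  next
    case False
    have "e div 2 ^ (i - 1) = 0" if "e \<in> set xs" "n < i" for e
      using assms that order_less_le_trans[of e "2 ^ n" "2 ^ (i - 1)"] by simp
    then have "\<forall>e\<in>set xs. e div 2 ^ (i - 1) mod 2 = 0" if "n < i"
      using that by simp
    then show ?thesis
      using False sum_mono_of[of "\<lambda>e. e div 2 ^ (i - 1) mod 2" xs]
      by (auto simp: omega_def mono_of_def sum_list_eq_0_iff)
  qed
qed

lemma lexless_unfold:
  "lexless a b \<longleftrightarrow> a 0 < b 0 \<or> (a 0 = b 0 \<and> lexless (a \<circ> Suc) (b \<circ> Suc))"
proof
  assume "lexless a b"
  then obtain i where i: "\<forall>j<i. a j = b j" "a i < b i"
    by (auto simp: lexless_def)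
  show "a 0 < b 0 \<or> (a 0 = b 0 \<and> lexless (a \<circ> Suc) (b \<circ> Suc))"
  proof (cases i)
    case (Suc i')
    then show ?thesis
      using i unfolding lexless_def by (intro disjI2 conjI exI[of _ i']) auto
  qed (use i in simp)
next
  assume "a 0 < b 0 \<or> (a 0 = b 0 \<and> lexless (a \<circ> Suc) (b \<circ> Suc))"
  then show "lexless a b"
  proof
    assume "a 0 = b 0 \<and> lexless (a \<circ> Suc) (b \<circ> Suc)"
    then obtain i where "a 0 = b 0" "\<forall>j<i. a (Suc j) = b (Suc j)" "a (Suc i) < b (Suc i)"
      by (auto simp: lexless_def)
    then show ?thesis
      unfolding lexless_def by (intro exI[of _ "Suc i"]) (auto simp: less_Suc_eq_0_disj)
  qed (auto simp: lexless_def)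
qed

lemma lexless_mono_of:
  "length xs = length ys \<Longrightarrow> lexless (mono_of xs) (mono_of ys) \<longleftrightarrow> ord_class.lexordp xs ys"
proof (induction xs arbitrary: ys)
  case Nil
  then show ?case by (simp add: lexless_def mono_of_def)
next
  case (Cons x xs)
  then obtain y ys' where ys: "ys = y # ys'" and len: "length xs = length ys'"
    by (cases ys) auto
  have drop_0: "lexless (mono_of zs) (mono_of zs') \<longleftrightarrow> lexless (mono_of zs \<circ> Suc) (mono_of zs' \<circ> Suc)"
    for zs zs'
    by (subst lexless_unfold) (simp add: mono_of_def)
  have shift: "mono_of (z # zs) \<circ> Suc = (mono_of zs)(0 := z)" for z zs
    by (auto simp: fun_eq_iff mono_of_def nth_Cons')
  have "lexless (mono_of (x # xs)) (mono_of ys) \<longleftrightarrow>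
      lexless ((mono_of xs)(0 := x)) ((mono_of ys')(0 := y))"
    by (simp add: drop_0[of "x # xs"] ys shift)
  also have "\<dots> \<longleftrightarrow> x < y \<or> (x = y \<and> lexless (mono_of xs \<circ> Suc) (mono_of ys' \<circ> Suc))"
    by (subst lexless_unfold) (simp add: comp_def)
  also have "\<dots> \<longleftrightarrow> ord_class.lexordp (x # xs) ys"
    using Cons.IH[OF len] by (auto simp: ys drop_0)
  finally show ?case .
qed

definition mono_less_list :: "nat \<Rightarrow> nat list \<Rightarrow> nat list \<Rightarrow> bool" where
  "mono_less_list n v u \<longleftrightarrow> length v = length u \<and> list_all (\<lambda>e. e < 2 ^ n) v \<and>
     sum_list v = sum_list u \<and>
     (ord_class.lexordp (omega_list n v) (omega_list n u) \<or>
      omega_list n v = omega_list n u \<and> ord_class.lexordp v u)"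

lemma mono_less_mono_of:
  assumes "\<forall>e\<in>set u. e < 2 ^ n" and "mono_less_list n v u"
  shows "mono_less (length u) (mono_of v) (mono_of u)"
proof -
  have len: "length v = length u" and v: "\<forall>e\<in>set v. e < 2 ^ n"
    using assms(2) by (auto simp: mono_less_list_def list_all_iff)
  have "mono_of (omega_list n v) = mono_of (omega_list n u) \<longleftrightarrow> omega_list n v = omega_list n u"
    using mono_of_inject[of "omega_list n v" "omega_list n u"] by auto
  moreover have "omega (length u) (mono_of v) = mono_of (omega_list n v)"
    using omega_mono_of[OF v] len by simp
  ultimately show ?thesis
    using assms(2) deg_mono_of[of u] deg_mono_of[of v]
    by (simp add: mono_less_def mono_less_list_def len omega_mono_of[OF assms(1)] lexless_mono_of)
qed

lemma Max_support_mono_of: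
  assumes "ws \<noteq> []" and "last ws \<noteq> 0"
  shows "Max {i. 1 \<le> i \<and> 0 < mono_of ws i} = length ws"
proof (rule Max_eqI)
  show "finite {i. 1 \<le> i \<and> 0 < mono_of ws i}"
    by (rule finite_subset[of _ "{..length ws}"]) (auto simp: mono_of_def split: if_splits)
  show "length ws \<in> {i. 1 \<le> i \<and> 0 < mono_of ws i}"
    using assms by (simp add: mono_of_def last_conv_nth Suc_le_eq)
qed (auto simp: mono_of_def split: if_splits)

definition certifies :: "nat \<Rightarrow> nat \<Rightarrow> nat list \<Rightarrow> (nat \<times> nat list) list \<Rightarrow> bool" where
  "certifies n s u gs \<longleftrightarrow> list_all (\<lambda>e. e < 2 ^ s) u \<and> 1 \<le> s \<and> s \<le> n \<and>
     last (omega_list s u) \<noteq> 0 \<and>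
     list_all (\<lambda>(i, g). 1 \<le> i \<and> i \<le> 2 ^ (s - 1) \<and> length g = length u) gs \<and>
     sq_sum_filter (\<lambda>v. \<not> mono_less_list n v u) gs = [u]"

lemma padd_insert_image:
  assumes "u \<in> A" and "\<forall>v\<in>A. length v = length u"
  shows "padd {mono_of u} (mono_of ` (A - {u})) = mono_of ` A"
proof -
  have "mono_of u \<noteq> mono_of v" if "v \<in> A - {u}" for v
    using that assms(2) mono_of_inject[of u v] by auto
  then have "mono_of u \<notin> mono_of ` (A - {u})"
    by blast
  then have "padd {mono_of u} (mono_of ` (A - {u})) = insert (mono_of u) (mono_of ` (A - {u}))"
    by (auto simp: padd_def)
  also have "\<dots> = mono_of ` A"
    using assms(1) by (simp add: insert_absorb flip: image_insert)
  finally show ?thesis .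
qed

lemma Max_omega_mono_of:
  assumes "\<forall>e\<in>set u. e < 2 ^ s" and "1 \<le> s" and "last (omega_list s u) \<noteq> 0"
  shows "Max {i. 1 \<le> i \<and> 0 < omega (length u) (mono_of u) i} = s"
proof -
  have "omega_list s u \<noteq> []"
    using assms(2) by (cases s) auto
  then show ?thesis
    using Max_support_mono_of[of "omega_list s u"] assms(3) by (simp add: omega_mono_of[OF assms(1)])
qed

theorem strictly_inadmissible_if_certifies:
  assumes "certifies n s u gs" and "length u = k"
  shows "strictly_inadmissible k (mono_of u)"
proof -
  have u: "\<forall>e\<in>set u. e < 2 ^ s" and s: "1 \<le> s" "s \<le> n"
    and top: "last (omega_list s u) \<noteq> 0"
    and gs: "\<forall>(i, g)\<in>set gs. 1 \<le> i \<and> i \<le> 2 ^ (s - 1) \<and> length g = k"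
    and leading: "set (filter (\<lambda>v. \<not> mono_less_list n v u) (sq_sum gs)) = {u}"
    using assms set_sq_sum_filter[of _ gs, symmetric]
    by (auto simp: certifies_def list_all_iff)
  have "(2::nat) ^ s \<le> 2 ^ n"
    using s(2) by (rule power_increasing) simp
  then have u_n: "\<forall>e\<in>set u. e < 2 ^ n"
    using u by (auto intro: order_less_le_trans)
  have "\<forall>(i, g)\<in>set gs. length g = k"
    using gs by auto
  then have lengths: "\<forall>v\<in>set (sq_sum gs). length v = k"
    using length_sq_sum by blast
  have u_in: "u \<in> set (sq_sum gs)"
    and lower: "\<And>v. v \<in> set (sq_sum gs) \<Longrightarrow> v \<noteq> u \<Longrightarrow> mono_less_list n v u"
    using leading by (auto simp: set_eq_iff)
  define V where "V = mono_of ` (set (sq_sum gs) - {u})"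
  have V_lower: "\<forall>w\<in>V. is_mono k w \<and> mono_less k w (mono_of u)"
  proof
    fix w assume "w \<in> V"
    then obtain v where "w = mono_of v" "v \<in> set (sq_sum gs)" "v \<noteq> u"
      by (auto simp: V_def)
    then show "is_mono k w \<and> mono_less k w (mono_of u)"
      using is_mono_mono_of[of v k] lengths mono_less_mono_of[OF u_n lower] assms(2) by simp
  qed
  have hit: "padd {mono_of u} V \<in> hitsp k (s - 1)"
    using padd_insert_image[OF u_in] lengths assms(2) sq_sum_in_hitsp[OF gs] by (simp add: V_def)
  have "Max {i. 1 \<le> i \<and> 0 < omega k (mono_of u) i} = s"
    using Max_omega_mono_of[OF u s(1) top] assms(2) by simp
  then show ?thesis
    unfolding strictly_inadmissible_def Let_def
  proof (intro conjI exI[of _ V])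
    show "is_mono k (mono_of u)"
      using assms(2) by (simp add: is_mono_mono_of)
    show "finite V"
      by (simp add: V_def)
  qed (use V_lower hit in simp_all)
qed

lemma mon_eq_0: "n \<notin> fst ` set ps \<Longrightarrow> mon ps n = 0"
  by (induction ps) (auto simp: mon_def)

lemma mon_eq_mono_ofI:
  assumes "\<forall>(m, e)\<in>set ps. 1 \<le> m \<and> m \<le> length xs" and "map (mon ps) [1..<Suc (length xs)] = xs"
  shows "mon ps = mono_of xs"
proof
  fix n
  show "mon ps n = mono_of xs n"
  proof (cases "1 \<le> n \<and> n \<le> length xs")
    case True
    then have "map (mon ps) [1..<Suc (length xs)] ! (n - 1) = mon ps n"
      by (subst nth_map_upt) auto
    with True show ?thesis
      using assms(2) by (simp add: mono_of_def)
  next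
    case False
    then show ?thesis
      using assms(1) by (auto simp: mono_of_def intro!: mon_eq_0)
  qed
qed

lemma mon_swap_last: "mon (ps @ [a, b]) = mon (ps @ [b, a])"
  by (simp add: fun_eq_iff mon_def)

definition insert_nth :: "nat \<Rightarrow> 'a \<Rightarrow> 'a list \<Rightarrow> 'a list" where
  "insert_nth p x xs = take p xs @ x # drop p xs"

definition insert_column :: "nat \<Rightarrow> nat \<Rightarrow> (nat \<times> nat list) list \<Rightarrow> (nat \<times> nat list) list" where
  "insert_column p e gs = map (\<lambda>(i, g). (i, insert_nth p e g)) gs"

lemma length_insert_nth [simp]: "p \<le> length xs \<Longrightarrow> length (insert_nth p x xs) = Suc (length xs)"
  by (simp add: insert_nth_def)

lemma ordered_triple_cases:
  assumes "{i, j, t, u, v} = {1..5::nat}" and "i < j" and "j < t"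
  shows "(i, j, t, min u v, max u v) \<in> {(1, 2, 3, 4, 5), (1, 2, 4, 3, 5), (1, 2, 5, 3, 4),
    (1, 3, 4, 2, 5), (1, 3, 5, 2, 4), (1, 4, 5, 2, 3), (2, 3, 4, 1, 5), (2, 3, 5, 1, 4),
    (2, 4, 5, 1, 3), (3, 4, 5, 1, 2)}"
proof -
  have "i \<in> {1..5}" "t \<in> {1..5}"
    using assms(1) by blast+
  then have "i = 1 \<and> j = 2 \<and> t = 3 \<or> i = 1 \<and> j = 2 \<and> t = 4 \<or> i = 1 \<and> j = 2 \<and> t = 5 \<or>
      i = 1 \<and> j = 3 \<and> t = 4 \<or> i = 1 \<and> j = 3 \<and> t = 5 \<or> i = 1 \<and> j = 4 \<and> t = 5 \<or>
      i = 2 \<and> j = 3 \<and> t = 4 \<or> i = 2 \<and> j = 3 \<and> t = 5 \<or> i = 2 \<and> j = 4 \<and> t = 5 \<or>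
      i = 3 \<and> j = 4 \<and> t = 5"
    using assms(2,3) unfolding atLeastAtMost_iff by presburger
  moreover have "1 \<in> {i, j, t, u, v}" "2 \<in> {i, j, t, u, v}" "3 \<in> {i, j, t, u, v}"
    "4 \<in> {i, j, t, u, v}" "5 \<in> {i, j, t, u, v}"
    by (simp_all add: assms(1))
  ultimately show ?thesis
    by (elim disjE conjE) (auto simp: min_def max_def)
qed

lemma mon_eq_insert_fifteens:
  assumes "{i, j, t, u, v} = {1..5::nat}" and "i < j" and "j < t"
  shows "mon [(i, x), (j, y), (t, z), (u, 15), (v, 15)] =
    mono_of (insert_nth (max u v - 1) 15 (insert_nth (min u v - 1) 15 [x, y, z]))"
proof -
  have "mon [(i, x), (j, y), (t, z), (u, 15), (v, 15)] =
      mon [(i, x), (j, y), (t, z), (min u v, 15), (max u v, 15)]"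
    using mon_swap_last[of "[(i, x), (j, y), (t, z)]" "(u, 15)" "(v, 15)"]
    by (cases "u \<le> v") (simp_all add: min_def max_def)
  also have "\<dots> = mono_of (insert_nth (max u v - 1) 15 (insert_nth (min u v - 1) 15 [x, y, z]))"
    using ordered_triple_cases[OF assms] unfolding insert_iff empty_iff prod.inject
    by (elim disjE conjE) (simp_all add: mon_eq_mono_ofI insert_nth_def mon_def upt_rec)
  finally show ?thesis .
qed

lemma theta_eval:
  "theta r w n = (if Jr r 1 = n then w 1 else 0) + (if Jr r 2 = n then w 2 else 0)
     + (if Jr r 3 = n then w 3 else 0) + (if Jr r 4 = n then w 4 else 0)"
proof -
  have "(\<Sum>t\<in>{1..4::nat}. f t) = f 1 + f 2 + f 3 + (f 4 :: nat)" for f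
    by (simp add: numeral_eq_Suc atLeastAtMostSuc_conv)
  then show ?thesis
    unfolding theta_def sum.inter_filter[OF finite_atLeastAtMost] by simp
qed

lemma mmul_theta_mono_of:
  assumes "r \<in> {1..5}" and "length w = 4"
  shows "mmul (mon [(r, e)]) (theta r (mono_of w)) = mono_of (insert_nth (r - 1) e w)"
proof
  fix n :: nat
  obtain a b c d where w: "w = [a, b, c, d]"
    using assms(2) by (auto simp: length_Suc_conv numeral_eq_Suc)
  have "n = 0 \<or> n = 1 \<or> n = 2 \<or> n = 3 \<or> n = 4 \<or> n = 5 \<or> 5 < n"
    by arith
  moreover have "r = 1 \<or> r = 2 \<or> r = 3 \<or> r = 4 \<or> r = 5"
    using assms(1) by auto
  ultimately show "mmul (mon [(r, e)]) (theta r (mono_of w)) n = mono_of (insert_nth (r - 1) e w) n"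
    by (elim disjE) (simp_all add: w mmul_def mon_def theta_eval Jr_def mono_of_def insert_nth_def)
qed

lemma binomial_numeral:
  "n choose numeral k = (n choose pred_numeral k) * (n - pred_numeral k) div numeral k"
proof -
  have "Suc j * (n choose Suc j) = (n - j) * (n choose j)" for j
    using binomial_absorption[of j n] binomial_absorb_comp[of n j] by simp
  then have "n choose Suc j = (n choose j) * (n - j) div Suc j" for j
    by (metis mult.commute nonzero_mult_div_cancel_left nat.simps(3))
  then show ?thesis
    by (simp add: numeral_eq_Suc)
qed

(* Evaluation rules for certifies on explicit data, to be used with One_nat_def deleted.
   omega_list is unfolded only on explicit lists, so that under the binder of the filter in
   certifies only the omega vector of u is computed, once per generator. *)
lemmas certifies_eval = certifies_def sq_list_def omega_list_if[of _ "_ # _"] mono_less_list_def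
  symdiff_list_def upt_rec choose_one binomial_numeral numeral_Bit0_div_2 numeral_Bit1_div_2
  mod_2_eq_odd One_nat_def[symmetric] insert_column_def insert_nth_def take_Cons' drop_Cons'

lemma less_5_cases: "r < (5::nat) \<Longrightarrow> r = 0 \<or> r = 1 \<or> r = 2 \<or> r = 3 \<or> r = 4"
  by arith

lemma less_pairs_5_cases:
  "a < b \<Longrightarrow> b < (5::nat) \<Longrightarrow>
    a = 0 \<and> b = 1 \<or> a = 0 \<and> b = 2 \<or> a = 1 \<and> b = 2 \<or> a = 0 \<and> b = 3 \<or> a = 1 \<and> b = 3 \<or>
    a = 2 \<and> b = 3 \<or> a = 0 \<and> b = 4 \<or> a = 1 \<and> b = 4 \<or> a = 2 \<and> b = 4 \<or> a = 3 \<and> b = 4"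
  by arith

lemma certificate_7_9_2:
  assumes "a < b" and "b < 5"
  shows "certifies 5 4 (insert_nth b 15 (insert_nth a 15 [7, 9, 2]))
    (insert_column b 15 (insert_column a 15
      [(1, [5, 7, 5]), (1, [7, 7, 3]), (2, [3, 7, 6]), (2, [6, 7, 3]), (2, [7, 7, 2]),
      (4, [5, 7, 2])]))"
  using less_pairs_5_cases[OF assms] by (elim disjE) (simp_all del: One_nat_def add: certifies_eval)

lemma certificate_3_7_8:
  assumes "a < b" and "b < 5"
  shows "certifies 5 4 (insert_nth b 15 (insert_nth a 15 [3, 7, 8]))
    (insert_column b 15 (insert_column a 15
      [(1, [3, 7, 7]), (2, [2, 7, 7]), (4, [3, 4, 7])]))"
  using less_pairs_5_cases[OF assms] by (elim disjE) (simp_all del: One_nat_def add: certifies_eval)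

lemma certificate_7_3_8:
  assumes "a < b" and "b < 5"
  shows "certifies 5 4 (insert_nth b 15 (insert_nth a 15 [7, 3, 8]))
    (insert_column b 15 (insert_column a 15
      [(1, [5, 5, 7]), (1, [7, 3, 7]), (2, [3, 6, 7]), (2, [6, 3, 7]), (2, [7, 2, 7]),
      (4, [5, 2, 7])]))"
  using less_pairs_5_cases[OF assms] by (elim disjE) (simp_all del: One_nat_def add: certifies_eval)

lemma certificate_7_8_3:
  assumes "a < b" and "b < 5"
  shows "certifies 5 4 (insert_nth b 15 (insert_nth a 15 [7, 8, 3]))
    (insert_column b 15 (insert_column a 15
      [(1, [7, 5, 5]), (2, [7, 3, 6]), (2, [7, 6, 3]), (4, [5, 3, 6]), (4, [5, 6, 3])]))"
  using less_pairs_5_cases[OF assms] by (elim disjE) (simp_all del: One_nat_def add: certifies_eval)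

lemma certificate_7_8_7_11:
  assumes "r < 5"
  shows "certifies 5 4 (insert_nth r 15 [7, 8, 7, 11]) (insert_column r 15
      [(1, [7, 5, 7, 13]), (2, [7, 3, 7, 14]), (2, [7, 6, 7, 11]), (4, [5, 3, 7, 14]),
      (4, [5, 6, 7, 11])])"
  using less_5_cases[OF assms] by (elim disjE) (simp_all del: One_nat_def add: certifies_eval)

lemma certificate_7_9_3_14:
  assumes "r < 5"
  shows "certifies 5 4 (insert_nth r 15 [7, 9, 3, 14]) (insert_column r 15
      [(1, [5, 7, 13, 7]), (1, [7, 7, 5, 13]), (1, [7, 7, 11, 7]), (1, [11, 3, 5, 13]),
      (2, [3, 7, 14, 7]), (2, [6, 7, 11, 7]), (2, [7, 7, 3, 14]), (2, [7, 7, 6, 11]),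
      (2, [7, 7, 10, 7]), (2, [11, 3, 6, 11]), (2, [11, 3, 10, 7]), (4, [5, 7, 3, 14]),
      (4, [5, 7, 6, 11]), (4, [5, 7, 10, 7]), (4, [7, 3, 5, 14]), (4, [7, 3, 12, 7]),
      (4, [7, 5, 6, 11]), (4, [7, 5, 10, 7]), (4, [13, 3, 6, 7])])"
  using less_5_cases[OF assms] by (elim disjE) (simp_all del: One_nat_def add: certifies_eval)

lemma certificate_7_9_6_11:
  assumes "r < 5"
  shows "certifies 5 4 (insert_nth r 15 [7, 9, 6, 11]) (insert_column r 15
      [(1, [7, 7, 5, 13]), (2, [7, 7, 3, 14]), (2, [7, 7, 6, 11]), (4, [5, 7, 3, 14]),
      (4, [5, 7, 6, 11])])"
  using less_5_cases[OF assms] by (elim disjE) (simp_all del: One_nat_def add: certifies_eval)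

lemma certificate_7_9_7_10:
  assumes "r < 5"
  shows "certifies 5 4 (insert_nth r 15 [7, 9, 7, 10]) (insert_column r 15
      [(1, [5, 7, 7, 13]), (1, [7, 7, 7, 11]), (2, [3, 7, 7, 14]), (2, [6, 7, 7, 11]),
      (2, [7, 7, 7, 10]), (4, [5, 7, 7, 10])])"
  using less_5_cases[OF assms] by (elim disjE) (simp_all del: One_nat_def add: certifies_eval)

lemma certificate_7_9_14_3:
  assumes "r < 5"
  shows "certifies 5 4 (insert_nth r 15 [7, 9, 14, 3]) (insert_column r 15
      [(1, [7, 7, 13, 5]), (2, [7, 7, 11, 6]), (2, [7, 7, 14, 3]), (4, [5, 7, 11, 6]),
      (4, [5, 7, 14, 3])])"
  using less_5_cases[OF assms] by (elim disjE) (simp_all del: One_nat_def add: certifies_eval)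

lemma certificate_7_11_7_8:
  assumes "r < 5"
  shows "certifies 5 4 (insert_nth r 15 [7, 11, 7, 8]) (insert_column r 15
      [(1, [5, 13, 7, 7]), (1, [7, 11, 7, 7]), (1, [7, 13, 3, 9]), (1, [7, 13, 5, 7]),
      (2, [3, 14, 7, 7]), (2, [6, 11, 7, 7]), (2, [7, 10, 7, 7]), (2, [7, 11, 3, 10]),
      (2, [7, 11, 6, 7]), (2, [7, 14, 3, 7]), (4, [5, 10, 7, 7]), (4, [5, 11, 6, 7]),
      (4, [5, 14, 3, 7])])"
  using less_5_cases[OF assms] by (elim disjE) (simp_all del: One_nat_def add: certifies_eval)

lemma certificate_7_9_7_14_11:
  "certifies 5 4 [7, 9, 7, 14, 11]
      [(1, [7, 7, 7, 13, 13]), (2, [7, 7, 7, 11, 14]), (2, [7, 7, 7, 14, 11]),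
      (4, [5, 7, 7, 11, 14]), (4, [5, 7, 7, 14, 11])]"
  by (simp del: One_nat_def add: certifies_eval)

lemma certificate_7_9_14_7_11:
  "certifies 5 4 [7, 9, 14, 7, 11]
      [(1, [7, 7, 13, 7, 13]), (2, [7, 7, 11, 7, 14]), (2, [7, 7, 14, 7, 11]),
      (4, [5, 7, 11, 7, 14]), (4, [5, 7, 14, 7, 11])]"
  by (simp del: One_nat_def add: certifies_eval)

lemma strictly_inadmissible_insert_fifteens:
  assumes "w \<in> {[7, 9, 2], [3, 7, 8], [7, 3, 8], [7, 8, 3]}" and "a < b" and "b < 5"
  shows "strictly_inadmissible 5 (mono_of (insert_nth b 15 (insert_nth a 15 w)))"
proof -
  obtain gs where "certifies 5 4 (insert_nth b 15 (insert_nth a 15 w)) gs"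
    using assms certificate_7_9_2 certificate_3_7_8 certificate_7_3_8 certificate_7_8_3 by blast
  then show ?thesis
    using assms by (auto intro: strictly_inadmissible_if_certifies)
qed

lemma strictly_inadmissible_insert_fifteen:
  assumes "w \<in> {[7, 8, 7, 11], [7, 9, 3, 14], [7, 9, 6, 11], [7, 9, 7, 10], [7, 9, 14, 3], [7, 11, 7, 8]}"
    and "r < 5"
  shows "strictly_inadmissible 5 (mono_of (insert_nth r 15 w))"
proof -
  obtain gs where "certifies 5 4 (insert_nth r 15 w) gs"
    using assms certificate_7_8_7_11 certificate_7_9_3_14 certificate_7_9_6_11
      certificate_7_9_7_10 certificate_7_9_14_3 certificate_7_11_7_8 by blast
  then show ?thesis
    using assms by (auto intro: strictly_inadmissible_if_certifies)
qed

lemma mon_eq_mono_of_4: "mon [(1, a), (2, b), (3, c), (4, d)] = mono_of [a, b, c, d]"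
  by (rule mon_eq_mono_ofI) (simp_all add: mon_def upt_rec)

lemma mon_eq_mono_of_5: "mon [(1, a), (2, b), (3, c), (4, d), (5, e)] = mono_of [a, b, c, d, e]"
  by (rule mon_eq_mono_ofI) (simp_all add: mon_def upt_rec)

lemma strictly_inadmissible_two_fifteens:
  assumes "{i, j, t, u, v} = {1..5::nat} \<and> i < j \<and> j < t"
  shows "strictly_inadmissible 5 (mon [(i,7),(j,9),(t,2),(u,15),(v,15)]) \<and>
    strictly_inadmissible 5 (mon [(i,3),(j,7),(t,8),(u,15),(v,15)]) \<and>
    strictly_inadmissible 5 (mon [(i,7),(j,3),(t,8),(u,15),(v,15)]) \<and>
    strictly_inadmissible 5 (mon [(i,7),(j,8),(t,3),(u,15),(v,15)])"
proof -
  have perm: "{i, j, t, u, v} = {1..5}" "i < j" "j < t"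
    using assms by auto
  then have "min u v - 1 < max u v - 1" "max u v - 1 < 5"
    using ordered_triple_cases[OF perm] by auto
  then show ?thesis
    by (simp add: mon_eq_insert_fifteens[OF perm] strictly_inadmissible_insert_fifteens)
qed

lemma strictly_inadmissible_one_fifteen:
  assumes "r \<in> {1..5::nat}"
    and "w \<in> set [mon [(1,7),(2,8),(3,7),(4,11)], mon [(1,7),(2,9),(3,3),(4,14)],
      mon [(1,7),(2,9),(3,6),(4,11)], mon [(1,7),(2,9),(3,7),(4,10)],
      mon [(1,7),(2,9),(3,14),(4,3)], mon [(1,7),(2,11),(3,7),(4,8)]]"
  shows "strictly_inadmissible 5 (mmul (mon [(r,15)]) (theta r w))"
proof -
  have "r - 1 < 5"
    using assms(1) unfolding atLeastAtMost_iff by linarith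
  with assms show ?thesis
    by (auto simp del: One_nat_def
        simp add: mon_eq_mono_of_4 mmul_theta_mono_of strictly_inadmissible_insert_fifteen)
qed

lemma strictly_inadmissible_no_fifteen:
  "strictly_inadmissible 5 (mon [(1,7),(2,9),(3,7),(4,14),(5,11)])"
  "strictly_inadmissible 5 (mon [(1,7),(2,9),(3,14),(4,7),(5,11)])"
  by (simp_all del: One_nat_def add: mon_eq_mono_of_5
      strictly_inadmissible_if_certifies[OF certificate_7_9_7_14_11]
      strictly_inadmissible_if_certifies[OF certificate_7_9_14_7_11])

theorem lemma3p8:
  shows "(\<forall>i j t u v. {i, j, t, u, v} = {1..5::nat} \<and> i < j \<and> j < t \<longrightarrow>
            strictly_inadmissible 5 (mon [(i,7),(j,9),(t,2),(u,15),(v,15)]) \<and>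
            strictly_inadmissible 5 (mon [(i,3),(j,7),(t,8),(u,15),(v,15)]) \<and>
            strictly_inadmissible 5 (mon [(i,7),(j,3),(t,8),(u,15),(v,15)]) \<and>
            strictly_inadmissible 5 (mon [(i,7),(j,8),(t,3),(u,15),(v,15)]))
       \<and> (\<forall>r\<in>{1..5::nat}. \<forall>w\<in>set [mon [(1,7),(2,8),(3,7),(4,11)], mon [(1,7),(2,9),(3,3),(4,14)],
                                  mon [(1,7),(2,9),(3,6),(4,11)], mon [(1,7),(2,9),(3,7),(4,10)],
                                  mon [(1,7),(2,9),(3,14),(4,3)], mon [(1,7),(2,11),(3,7),(4,8)]].
            strictly_inadmissible 5 (mmul (mon [(r,15)]) (theta r w)))
       \<and> strictly_inadmissible 5 (mon [(1,7),(2,9),(3,7),(4,14),(5,11)])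
       \<and> strictly_inadmissible 5 (mon [(1,7),(2,9),(3,14),(4,7),(5,11)])"
  using strictly_inadmissible_two_fifteens strictly_inadmissible_one_fifteen
    strictly_inadmissible_no_fifteen by blast

end
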